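(* Consider the following algorithm (PMI) on training bags $B_1,\dots,B_N$, $B_i=[B_{i1},\dots,B_{iN_i}]$, $B_{ij}\in\mathbb{R}^d$, $n=\sum_iN_i$, with kernel $\ker$ (feature map $\Phi$) and parameter $\nu\in(0,1)$, and with access to an oracle returning the label ($\pm1$) of any queried instance. Repeat: (1) compute $\lambda$ minimizing $\sum_i\|\sum_j\lambda_{ij}\Phi(B_{ij})-\frac1N\sum_k\sum_j\lambda_{kj}\Phi(B_{kj})\|^2$ s.t. $\sum_j\lambda_{ij}=1$, $\lambda_{ij}\ge0$, and set $b_i=\sum_j\lambda_{ij}\Phi(B_{ij})$; (2) solve $\min_\alpha\frac12\sum_{i,j}\alpha_i\alpha_j\ker(b_i,b_j)$ s.t. $0\le\alpha_i\le\frac1{\nu N}$, $\sum_i\alpha_i=1$, giving $\rho$, $l(x)=\sum_j\alpha_j\sum_k\lambda_{jk}\ker(x,B_{jk})-\rho$ and $f(x)=\operatorname{sign}(l(x))$; (3)–(4) if some bag $B_i$ has $\alpha_i<\frac1{\nu N}$ and $\max_j f(B_{ij})=-1$, choose $s_i=\arg\max_j l(B_{ij})$ for every $i$, solve $\min_{\alpha'}\frac12\sum_{p,q}\alpha'_p\alpha'_q\ker(x_p,x_q)$ s.t. $0\le\alpha'_p\le\frac1{2\nu N}$, $\sum_p\alpha'_p=1$ over the $2N$ points $\{b_i\}\cup\{B_{is_i}\}$, and replace $l,f$ by the resulting $l'(x)=\sum_p\alpha'_p\ker(x,x_p)-\rho'$, $f=\operatorname{sign}(l')$; (6) if some bag has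 $f(B_{ij})=1$ for all its instances, stop; (7) query the label of $\arg\max_{i,j}\{l(B_{ij}) : l(B_{ij})\ge0\}$; (8) if it is positive, stop; otherwise remove from all bags every instance $B_{ij}$ with $f(B_{ij})=1$ and repeat from (1) (with $N_i$, $n$ updated). Then: if $\nu<\frac1N$, the maximum number of queried instances is $\min_{i=1,\dots,N}N_i-1$; otherwise the maximum number of queried instances is $\lceil\frac{n}{(1-\nu)N}\rceil-1$.
   Context: $N_i$, $n$ and $N$ in the conclusion refer to the initial training set. $\operatorname{sign}(y)=+1$ if $y\ge0$ and $-1$ otherwise; $\ker(x,y)=\Phi(x)\cdot\Phi(y)$, and kernel values involving virtual instances $b_i$ are expanded linearly, $\ker(b_i,b_j)=\sum_{k,r}\lambda_{ik}\lambda_{jr}\ker(B_{ik},B_{jr})$. $\rho$ is $\sum_i\alpha_i\ker(b_i,b_j)$ for any $j$ with $0<\alpha_j<\frac1{\nu N}$ (analogously $\rho'$). $\lceil x\rceil$ is the least integer not smaller than $x$. *)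

theory Defs
  imports "HOL-Analysis.Analysis"
begin

definition kern :: "('x \<Rightarrow> 'h::real_inner) \<Rightarrow> 'x \<Rightarrow> 'x \<Rightarrow> real" where
  "kern Phi x y = Phi x \<bullet> Phi y"

definition sgn1 :: "real \<Rightarrow> int" where
  "sgn1 y = (if y \<ge> 0 then 1 else -1)"

text \<open>Step (1): weights lambda on each bag (bags are lists; i < N, j < N_i).\<close>
definition lam_feasible :: "'x list list \<Rightarrow> (nat \<Rightarrow> nat \<Rightarrow> real) \<Rightarrow> bool" where
  "lam_feasible Bs lam \<longleftrightarrow>
     (\<forall>i<length Bs. (\<Sum>j<length (Bs!i). lam i j) = 1 \<and> (\<forall>j<length (Bs!i). lam i j \<ge> 0))"

definition virt :: "('x \<Rightarrow> 'h::real_inner) \<Rightarrow> 'x list list \<Rightarrow> (nat \<Rightarrow> nat \<Rightarrow> real) \<Rightarrow> nat \<Rightarrow> 'h" where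
  "virt Phi Bs lam i = (\<Sum>j<length (Bs!i). lam i j *\<^sub>R Phi (Bs!i!j))"

definition lam_obj :: "('x \<Rightarrow> 'h::real_inner) \<Rightarrow> 'x list list \<Rightarrow> (nat \<Rightarrow> nat \<Rightarrow> real) \<Rightarrow> real" where
  "lam_obj Phi Bs lam =
     (\<Sum>i<length Bs. (norm (virt Phi Bs lam i
        - (1 / real (length Bs)) *\<^sub>R (\<Sum>k<length Bs. virt Phi Bs lam k)))\<^sup>2)"

definition lam_min :: "('x \<Rightarrow> 'h::real_inner) \<Rightarrow> 'x list list \<Rightarrow> (nat \<Rightarrow> nat \<Rightarrow> real) \<Rightarrow> bool" where
  "lam_min Phi Bs lam \<longleftrightarrow> lam_feasible Bs lam \<and>
     (\<forall>mu. lam_feasible Bs mu \<longrightarrow> lam_obj Phi Bs lam \<le> lam_obj Phi Bs mu)"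

text \<open>The quadratic programs of steps (2) and (4): M points, Gram matrix K, box bound C.\<close>
definition qp_feas :: "nat \<Rightarrow> real \<Rightarrow> (nat \<Rightarrow> real) \<Rightarrow> bool" where
  "qp_feas M C a \<longleftrightarrow> (\<forall>i<M. 0 \<le> a i \<and> a i \<le> C) \<and> (\<Sum>i<M. a i) = 1"

definition qp_obj :: "nat \<Rightarrow> (nat \<Rightarrow> nat \<Rightarrow> real) \<Rightarrow> (nat \<Rightarrow> real) \<Rightarrow> real" where
  "qp_obj M K a = 1/2 * (\<Sum>i<M. \<Sum>j<M. a i * a j * K i j)"

definition qp_min :: "nat \<Rightarrow> real \<Rightarrow> (nat \<Rightarrow> nat \<Rightarrow> real) \<Rightarrow> (nat \<Rightarrow> real) \<Rightarrow> bool" where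
  "qp_min M C K a \<longleftrightarrow> qp_feas M C a \<and> (\<forall>c. qp_feas M C c \<longrightarrow> qp_obj M K a \<le> qp_obj M K c)"

definition offset_ok :: "nat \<Rightarrow> real \<Rightarrow> (nat \<Rightarrow> nat \<Rightarrow> real) \<Rightarrow> (nat \<Rightarrow> real) \<Rightarrow> real \<Rightarrow> bool" where
  "offset_ok M C K a rho \<longleftrightarrow> (\<exists>j<M. 0 < a j \<and> a j < C \<and> rho = (\<Sum>i<M. a i * K i j))"

text \<open>Steps (1)-(2): lambda, alpha, rho.  ker(b_i,b_j) (linear expansion) = b_i . b_j.\<close>
definition base_classifier :: "('x \<Rightarrow> 'h::real_inner) \<Rightarrow> real \<Rightarrow> 'x list list
    \<Rightarrow> (nat \<Rightarrow> nat \<Rightarrow> real) \<Rightarrow> (nat \<Rightarrow> real) \<Rightarrow> real \<Rightarrow> bool" where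
  "base_classifier Phi nu Bs lam a rho \<longleftrightarrow>
     lam_min Phi Bs lam \<and>
     qp_min (length Bs) (1 / (nu * real (length Bs)))
        (\<lambda>i j. virt Phi Bs lam i \<bullet> virt Phi Bs lam j) a \<and>
     offset_ok (length Bs) (1 / (nu * real (length Bs)))
        (\<lambda>i j. virt Phi Bs lam i \<bullet> virt Phi Bs lam j) a rho"

definition lfun :: "('x \<Rightarrow> 'h::real_inner) \<Rightarrow> 'x list list \<Rightarrow> (nat \<Rightarrow> nat \<Rightarrow> real)
    \<Rightarrow> (nat \<Rightarrow> real) \<Rightarrow> real \<Rightarrow> 'x \<Rightarrow> real" where
  "lfun Phi Bs lam a rho x =
     (\<Sum>j<length Bs. a j * (\<Sum>k<length (Bs!j). lam j k * kern Phi x (Bs!j!k))) - rho"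

definition refined_points :: "('x \<Rightarrow> 'h::real_inner) \<Rightarrow> 'x list list \<Rightarrow> (nat \<Rightarrow> nat \<Rightarrow> real)
    \<Rightarrow> (nat \<Rightarrow> nat) \<Rightarrow> nat \<Rightarrow> 'h" where
  "refined_points Phi Bs lam s p =
     (if p < length Bs then virt Phi Bs lam p else Phi (Bs!(p - length Bs)!(s (p - length Bs))))"

text \<open>Steps (3)-(4): s_i = argmax_j l(B_ij), alpha', rho', and the new function l'.\<close>
definition refined_classifier :: "('x \<Rightarrow> 'h::real_inner) \<Rightarrow> real \<Rightarrow> 'x list list
    \<Rightarrow> (nat \<Rightarrow> nat \<Rightarrow> real) \<Rightarrow> ('x \<Rightarrow> real) \<Rightarrow> ('x \<Rightarrow> real) \<Rightarrow> bool" where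
  "refined_classifier Phi nu Bs lam l l' \<longleftrightarrow>
     (\<exists>s a' rho'.
        (\<forall>i<length Bs. s i < length (Bs!i) \<and>
            (\<forall>j<length (Bs!i). l (Bs!i!j) \<le> l (Bs!i!(s i)))) \<and>
        qp_min (2 * length Bs) (1 / (2 * nu * real (length Bs)))
          (\<lambda>p q. refined_points Phi Bs lam s p \<bullet> refined_points Phi Bs lam s q) a' \<and>
        offset_ok (2 * length Bs) (1 / (2 * nu * real (length Bs)))
          (\<lambda>p q. refined_points Phi Bs lam s p \<bullet> refined_points Phi Bs lam s q) a' rho' \<and>
        l' = (\<lambda>x. (\<Sum>p<2 * length Bs. a' p * (Phi x \<bullet> refined_points Phi Bs lam s p)) - rho'))"

text \<open>The decision function l used in steps (6)-(8) of one round.\<close>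
definition round_classifier :: "('x \<Rightarrow> 'h::real_inner) \<Rightarrow> real \<Rightarrow> 'x list list \<Rightarrow> ('x \<Rightarrow> real) \<Rightarrow> bool" where
  "round_classifier Phi nu Bs l \<longleftrightarrow>
     (\<exists>lam a rho. base_classifier Phi nu Bs lam a rho \<and>
        (if (\<exists>i<length Bs. a i < 1 / (nu * real (length Bs)) \<and> Bs!i \<noteq> [] \<and>
                (\<forall>x\<in>set (Bs!i). sgn1 (lfun Phi Bs lam a rho x) = -1))
         then refined_classifier Phi nu Bs lam (lfun Phi Bs lam a rho) l
         else l = lfun Phi Bs lam a rho))"

text \<open>Algorithm states: running with current bags and number of queries so far, or stopped.\<close>
datatype 'x pmi_state = Run "'x list list" nat | Stop nat

fun queries :: "'x pmi_state \<Rightarrow> nat" where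
  "queries (Run _ q) = q"
| "queries (Stop q) = q"

text \<open>One iteration of PMI (label x = True iff the label of x is +1).\<close>
definition pmi_step :: "('x \<Rightarrow> 'h::real_inner) \<Rightarrow> real \<Rightarrow> ('x \<Rightarrow> bool)
    \<Rightarrow> 'x pmi_state \<Rightarrow> 'x pmi_state \<Rightarrow> bool" where
  "pmi_step Phi nu label st st' \<longleftrightarrow>
     (\<exists>Bs q l. st = Run Bs q \<and> round_classifier Phi nu Bs l \<and>
        (if (\<exists>i<length Bs. \<forall>x\<in>set (Bs!i). sgn1 (l x) = 1)
         then st' = Stop q
         else (\<exists>i j. i < length Bs \<and> j < length (Bs!i) \<and> l (Bs!i!j) \<ge> 0 \<and>
                 (\<forall>i' j'. i' < length Bs \<longrightarrow> j' < length (Bs!i') \<longrightarrow> l (Bs!i'!j') \<ge> 0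
                      \<longrightarrow> l (Bs!i'!j') \<le> l (Bs!i!j)) \<and>
                 (if label (Bs!i!j) then st' = Stop (Suc q)
                  else st' = Run (map (filter (\<lambda>x. sgn1 (l x) \<noteq> 1)) Bs) (Suc q)))))"

end

theory Submission
  imports Defs
begin

text \<open>In every round the optimality of the box-constrained quadratic program forces each point
whose weight is below the box bound to lie on the nonnegative side of the decision function, and
at most \<open>\<nu>N\<close> bags (or \<open>2\<nu>N\<close> of the \<open>2N\<close> points of the refined program) can reach the bound.
Since a virtual instance is a convex combination of its bag, at least \<open>(1 - \<nu>)N\<close> bags contain an
instance with \<open>l \<ge> 0\<close>. A negative answer removes all these instances, while no bag is emptied
(otherwise the algorithm would have stopped), so each query costs at least \<open>(1 - \<nu>)N\<close> of the \<open>n\<close>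
instances. If \<open>\<nu> < 1/N\<close> no bag is capped, so every query shrinks every bag.\<close>

lemma qp_obj_gram_eq_norm:
  "qp_obj M (\<lambda>i j. x i \<bullet> x j) a = 1/2 * (norm (\<Sum>i<M. a i *\<^sub>R x i))\<^sup>2"
  unfolding qp_obj_def power2_norm_eq_inner
  by (simp add: inner_sum_left inner_sum_right sum_distrib_left mult.assoc)
    (intro sum.cong refl, simp add: inner_commute)

lemma sum_transfer_scaleR:
  fixes x :: "nat \<Rightarrow> 'a::real_vector"
  assumes "p < M" "j < M"
  shows "(\<Sum>i<M. (a i + (if i = p then t else 0) - (if i = j then t else 0)) *\<^sub>R x i)
           = (\<Sum>i<M. a i *\<^sub>R x i) + t *\<^sub>R (x p - x j)"
  using assms by (simp add: scaleR_add_left scaleR_diff_left sum.distrib sum_subtractf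
      if_distrib[of "\<lambda>c. c *\<^sub>R _"] scaleR_diff_right cong: if_cong)

lemma qp_feas_transfer:
  assumes "qp_feas M C a" "p < M" "j < M" "p \<noteq> j" "0 \<le> t" "t \<le> a j" "t \<le> C - a p"
  shows "qp_feas M C (\<lambda>i. a i + (if i = p then t else 0) - (if i = j then t else 0))"
  using assms by (auto simp: qp_feas_def sum.distrib sum_subtractf)

lemma exists_step_below:
  fixes d D m :: real
  assumes "0 < m" "0 < d" "0 \<le> D"
  obtains t where "0 < t" "t \<le> m" "t * D < 2 * d"
proof (cases "D = 0")
  case True
  with assms show ?thesis by (intro that[of m]) auto
next
  case False
  define t where "t = min m (d / D)"
  have "t * D \<le> d / D * D" using assms False by (intro mult_right_mono) (auto simp: t_def)
  with assms False show ?thesis by (intro that[of t]) (auto simp: t_def)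
qed

lemma qp_min_gram_inner_mono:
  fixes x :: "nat \<Rightarrow> 'h::real_inner"
  assumes qm: "qp_min M C (\<lambda>i j. x i \<bullet> x j) a"
    and j: "j < M" "0 < a j" and p: "p < M" "a p < C"
  shows "(\<Sum>i<M. a i *\<^sub>R x i) \<bullet> x j \<le> (\<Sum>i<M. a i *\<^sub>R x i) \<bullet> x p"
proof (rule ccontr)
  define w where "w = (\<Sum>i<M. a i *\<^sub>R x i)"
  define v where "v = x p - x j"
  assume "\<not> ?thesis"
  hence wv: "w \<bullet> v < 0" by (simp add: w_def v_def inner_diff_right)
  hence "p \<noteq> j" by (auto simp: v_def)
  obtain t where t: "0 < t" "t \<le> min (a j) (C - a p)" "t * (v \<bullet> v) < 2 * - (w \<bullet> v)"
    using exists_step_below[of "min (a j) (C - a p)" "- (w \<bullet> v)" "v \<bullet> v"] j p wv by auto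
  \<comment> \<open>shifting weight \<open>t\<close> from \<open>j\<close> to \<open>p\<close> changes the objective by \<open>t (w\<bullet>v + t \<parallel>v\<parallel>\<^sup>2/2) < 0\<close>\<close>
  define c where "c = (\<lambda>i. a i + (if i = p then t else 0) - (if i = j then t else 0))"
  have feas: "qp_feas M C a" using qm by (simp add: qp_min_def)
  have "qp_obj M (\<lambda>i j. x i \<bullet> x j) c = 1/2 * ((w + t *\<^sub>R v) \<bullet> (w + t *\<^sub>R v))"
    by (simp add: qp_obj_gram_eq_norm c_def sum_transfer_scaleR p j power2_norm_eq_inner w_def v_def)
  also have "\<dots> = 1/2 * (w \<bullet> w) + t * (w \<bullet> v + t * (v \<bullet> v) / 2)"
    by (simp add: inner_commute[of v w] algebra_simps)
  also have "\<dots> < 1/2 * (w \<bullet> w)"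
    using t by (simp add: mult_pos_neg)
  also have "\<dots> = qp_obj M (\<lambda>i j. x i \<bullet> x j) a"
    by (simp add: qp_obj_gram_eq_norm w_def power2_norm_eq_inner)
  finally show False
    using qm qp_feas_transfer[OF feas p(1) j(1) \<open>p \<noteq> j\<close>, of t] t
    by (auto simp: qp_min_def c_def)
qed

lemma qp_min_offset_le:
  fixes x :: "nat \<Rightarrow> 'h::real_inner"
  assumes qm: "qp_min M C (\<lambda>i j. x i \<bullet> x j) a"
    and off: "offset_ok M C (\<lambda>i j. x i \<bullet> x j) a rho"
    and p: "p < M" "a p < C"
  shows "rho \<le> (\<Sum>i<M. a i *\<^sub>R x i) \<bullet> x p"
proof -
  obtain j where j: "j < M" "0 < a j" "rho = (\<Sum>i<M. a i * (x i \<bullet> x j))"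
    using off by (auto simp: offset_ok_def)
  hence "rho = (\<Sum>i<M. a i *\<^sub>R x i) \<bullet> x j" by (simp add: inner_sum_left)
  with qp_min_gram_inner_mono[OF qm j(1,2) p] show ?thesis by simp
qed

lemma qp_feas_card_capped_le:
  assumes "qp_feas M (1 / K) a" "0 < K"
  shows "real (card {p. p < M \<and> 1 / K \<le> a p}) \<le> K"
proof -
  let ?S = "{p. p < M \<and> 1 / K \<le> a p}"
  have "real (card ?S) / K = (\<Sum>p\<in>?S. 1 / K)" by simp
  also have "\<dots> \<le> (\<Sum>p\<in>?S. a p)" by (rule sum_mono) auto
  also have "\<dots> \<le> (\<Sum>p<M. a p)"
    using assms by (intro sum_mono2) (auto simp: qp_feas_def)
  also have "\<dots> = 1" using assms by (simp add: qp_feas_def)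
  finally show ?thesis using assms by (simp add: field_simps)
qed

lemma convex_combination_nonneg_imp_ex_nonneg:
  fixes lam f :: "nat \<Rightarrow> real"
  assumes "\<forall>k<n. 0 \<le> lam k" "(\<Sum>k<n. lam k) = 1" "0 \<le> (\<Sum>k<n. lam k * f k)"
  shows "\<exists>k<n. 0 \<le> f k"
proof (rule ccontr)
  define g where "g k = - (lam k * f k)" for k
  assume "\<not> ?thesis"
  hence neg: "\<forall>k<n. f k < 0" by auto
  hence g: "\<forall>k\<in>{..<n}. 0 \<le> g k"
    using assms(1) by (force simp: g_def mult_le_0_iff)
  moreover have "sum g {..<n} \<le> 0"
    using assms(3) by (simp add: g_def sum_negf)
  ultimately have "sum g {..<n} = 0" by (meson antisym sum_nonneg)
  with g have "\<forall>k<n. g k = 0" using sum_nonneg_eq_0_iff[of "{..<n}" g] by simp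
  with neg have "\<forall>k<n. lam k = 0" by (force simp: g_def)
  with assms(2) show False by simp
qed

lemma virt_inner_ge_imp_ex_instance:
  assumes "lam_feasible Bs lam" "i < length Bs" "r \<le> w \<bullet> virt Phi Bs lam i"
  shows "\<exists>x\<in>set (Bs!i). r \<le> Phi x \<bullet> w"
proof -
  have lam: "\<forall>k<length (Bs!i). 0 \<le> lam i k" "(\<Sum>k<length (Bs!i). lam i k) = 1"
    using assms(1,2) by (auto simp: lam_feasible_def)
  have "w \<bullet> virt Phi Bs lam i - r = (\<Sum>k<length (Bs!i). lam i k * (Phi (Bs!i!k) \<bullet> w - r))"
    using lam(2) by (simp add: virt_def inner_sum_right right_diff_distrib sum_subtractf
        inner_commute flip: sum_distrib_right)
  with assms(3) obtain k where "k < length (Bs!i)" "0 \<le> Phi (Bs!i!k) \<bullet> w - r"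
    using convex_combination_nonneg_imp_ex_nonneg[OF lam, of "\<lambda>k. Phi (Bs!i!k) \<bullet> w - r"]
    by auto
  thus ?thesis by (auto intro!: bexI[of _ "Bs!i!k"])
qed

lemma lfun_eq_inner:
  "lfun Phi Bs lam a rho x = Phi x \<bullet> (\<Sum>j<length Bs. a j *\<^sub>R virt Phi Bs lam j) - rho"
  by (simp add: lfun_def virt_def kern_def inner_sum_right sum_distrib_left)

definition nonneg_bags :: "'x list list \<Rightarrow> ('x \<Rightarrow> real) \<Rightarrow> nat set" where
  "nonneg_bags Bs l = {i. i < length Bs \<and> (\<exists>x\<in>set (Bs!i). 0 \<le> l x)}"

lemma finite_nonneg_bags: "finite (nonneg_bags Bs l)"
  by (simp add: nonneg_bags_def)

lemma base_classifier_card_nonneg_bags: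
  assumes bc: "base_classifier Phi nu Bs lam a rho" and "Bs \<noteq> []" "0 < nu"
  shows "(1 - nu) * real (length Bs) \<le> real (card (nonneg_bags Bs (lfun Phi Bs lam a rho)))"
proof -
  define N where "N = length Bs"
  define w where "w = (\<Sum>j<N. a j *\<^sub>R virt Phi Bs lam j)"
  define Capped where "Capped = {i. i < N \<and> 1 / (nu * real N) \<le> a i}"
  have N: "0 < real N" using assms by (simp add: N_def)
  have lam: "lam_feasible Bs lam"
    and qm: "qp_min N (1 / (nu * real N)) (\<lambda>i j. virt Phi Bs lam i \<bullet> virt Phi Bs lam j) a"
    and off: "offset_ok N (1 / (nu * real N)) (\<lambda>i j. virt Phi Bs lam i \<bullet> virt Phi Bs lam j) a rho"
    using bc by (auto simp: base_classifier_def lam_min_def N_def)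
  have "real (card Capped) \<le> nu * real N"
    unfolding Capped_def using qm N assms(3)
    by (intro qp_feas_card_capped_le) (auto simp: qp_min_def)
  moreover have "{..<N} \<subseteq> nonneg_bags Bs (lfun Phi Bs lam a rho) \<union> Capped"
  proof
    fix i assume i: "i \<in> {..<N}"
    show "i \<in> nonneg_bags Bs (lfun Phi Bs lam a rho) \<union> Capped"
    proof (cases "i \<in> Capped")
      case False
      with i have "rho \<le> w \<bullet> virt Phi Bs lam i"
        using qp_min_offset_le[OF qm off] by (auto simp: Capped_def w_def)
      with virt_inner_ge_imp_ex_instance[OF lam] i
      have "\<exists>x\<in>set (Bs!i). 0 \<le> lfun Phi Bs lam a rho x"
        by (force simp: lfun_eq_inner w_def N_def)
      with i show ?thesis by (simp add: nonneg_bags_def N_def)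
    qed simp
  qed
  have "N \<le> card (nonneg_bags Bs (lfun Phi Bs lam a rho)) + card Capped"
  proof -
    have "N \<le> card (nonneg_bags Bs (lfun Phi Bs lam a rho) \<union> Capped)"
      using card_mono[OF _ \<open>{..<N} \<subseteq> _\<close>] by (simp add: finite_nonneg_bags Capped_def)
    also have "\<dots> \<le> card (nonneg_bags Bs (lfun Phi Bs lam a rho)) + card Capped"
      by (rule card_Un_le)
    finally show ?thesis .
  qed
  ultimately show ?thesis by (simp add: N_def algebra_simps)
qed

lemma refined_classifier_card_nonneg_bags:
  assumes rc: "refined_classifier Phi nu Bs lam l0 l" and lam: "lam_feasible Bs lam"
    and "Bs \<noteq> []" "0 < nu"
  shows "(1 - nu) * real (length Bs) \<le> real (card (nonneg_bags Bs l))"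
proof -
  define N where "N = length Bs"
  define C where "C = 1 / (2 * nu * real N)"
  obtain s a rho where s: "\<forall>i<N. s i < length (Bs!i)"
    and qm: "qp_min (2*N) C (\<lambda>p q. refined_points Phi Bs lam s p \<bullet> refined_points Phi Bs lam s q) a"
    and off: "offset_ok (2*N) C (\<lambda>p q. refined_points Phi Bs lam s p \<bullet> refined_points Phi Bs lam s q) a rho"
    and l: "l = (\<lambda>x. (\<Sum>p<2*N. a p * (Phi x \<bullet> refined_points Phi Bs lam s p)) - rho)"
    using rc unfolding refined_classifier_def N_def C_def by blast
  define w where "w = (\<Sum>p<2*N. a p *\<^sub>R refined_points Phi Bs lam s p)"
  define Neg where "Neg = {..<N} - nonneg_bags Bs l"
  define Capped where "Capped = {p. p < 2*N \<and> C \<le> a p}"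
  have N: "0 < real N" using assms by (simp add: N_def)
  have l_eq: "l x = Phi x \<bullet> w - rho" for x
    by (simp add: l w_def inner_sum_right)
  have uncapped: "rho \<le> w \<bullet> refined_points Phi Bs lam s p" if "p < 2*N" "\<not> p \<in> Capped" for p
    using qp_min_offset_le[OF qm off] that by (auto simp: Capped_def w_def)
  have "real (card Capped) \<le> 2 * nu * real N"
    unfolding Capped_def C_def using qm N assms(4)
    by (intro qp_feas_card_capped_le) (auto simp: qp_min_def C_def)
  \<comment> \<open>a bag without nonnegative instance caps both its virtual point and its chosen instance\<close>
  moreover have "Neg \<union> (\<lambda>i. N + i) ` Neg \<subseteq> Capped"
  proof safe
    fix i assume i: "i \<in> Neg"
    hence "i < N" "\<forall>x\<in>set (Bs!i). l x < 0"
      by (auto simp: Neg_def nonneg_bags_def N_def not_le)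
    moreover from this(1) have "\<exists>x\<in>set (Bs!i). 0 \<le> l x" if "i \<notin> Capped"
      using uncapped[of i] that virt_inner_ge_imp_ex_instance[OF lam, of i rho w]
      by (force simp: refined_points_def N_def l_eq)
    ultimately show "i \<in> Capped" by force
    have "Bs!i!(s i) \<in> set (Bs!i)" using s \<open>i < N\<close> by simp
    moreover have "0 \<le> l (Bs!i!(s i))" if "N + i \<notin> Capped"
      using uncapped[of "N + i"] that \<open>i < N\<close>
      by (simp add: refined_points_def N_def l_eq inner_commute)
    ultimately show "N + i \<in> Capped" using \<open>\<forall>x\<in>set (Bs!i). l x < 0\<close> by force
  qed
  hence "card (Neg \<union> (\<lambda>i. N + i) ` Neg) \<le> card Capped"
    by (intro card_mono) (auto simp: Capped_def)
  moreover have "card (Neg \<union> (\<lambda>i. N + i) ` Neg) = 2 * card Neg"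
    by (subst card_Un_disjoint) (auto simp: Neg_def card_image)
  moreover have "card Neg = N - card (nonneg_bags Bs l)"
    unfolding Neg_def
    by (subst card_Diff_subset) (auto simp: nonneg_bags_def N_def finite_nonneg_bags)
  moreover have "card (nonneg_bags Bs l) \<le> N"
    using card_mono[of "{..<N}" "nonneg_bags Bs l"] by (auto simp: nonneg_bags_def N_def)
  ultimately show ?thesis by (simp add: N_def algebra_simps)
qed

lemma round_classifier_card_nonneg_bags:
  assumes "round_classifier Phi nu Bs l" "Bs \<noteq> []" "0 < nu"
  shows "(1 - nu) * real (length Bs) \<le> real (card (nonneg_bags Bs l))"
proof -
  obtain lam a rho where bc: "base_classifier Phi nu Bs lam a rho"
    and l: "l = lfun Phi Bs lam a rho \<or> refined_classifier Phi nu Bs lam (lfun Phi Bs lam a rho) l"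
    using assms(1) unfolding round_classifier_def by (metis (full_types))
  have "lam_feasible Bs lam" using bc by (simp add: base_classifier_def lam_min_def)
  with l base_classifier_card_nonneg_bags[OF bc] refined_classifier_card_nonneg_bags assms(2,3)
  show ?thesis by blast
qed

lemma sum_plus_card_le_sum:
  fixes f g :: "nat \<Rightarrow> nat"
  assumes "\<forall>i<N. f i \<le> g i" "\<forall>i\<in>P. i < N \<and> f i < g i"
  shows "(\<Sum>i<N. f i) + card P \<le> (\<Sum>i<N. g i)"
proof -
  have "P \<subseteq> {..<N}" using assms(2) by auto
  hence "card P = (\<Sum>i<N. if i \<in> P then 1 else 0)"
    by (simp add: sum.If_cases Int_absorb1)
  hence "(\<Sum>i<N. f i) + card P = (\<Sum>i<N. f i + (if i \<in> P then 1 else 0))"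
    by (simp add: sum.distrib)
  also have "\<dots> \<le> (\<Sum>i<N. g i)"
    using assms by (intro sum_mono) (auto simp: Suc_le_eq)
  finally show ?thesis .
qed

lemma sgn1_eq_1_iff: "sgn1 y = 1 \<longleftrightarrow> 0 \<le> y"
  by (simp add: sgn1_def)

lemma sum_list_map_eq_sum_nth: "sum_list (map f xs) = (\<Sum>i<length xs. f (xs!i))"
  by (simp add: sum_list_sum_nth atLeast0LessThan)

text \<open>\<open>Bs'\<close> are the bags after \<open>q\<close> negative answers, \<open>Bs\<close> the initial ones.\<close>

definition pmi_run_inv :: "real \<Rightarrow> 'x list list \<Rightarrow> 'x list list \<Rightarrow> nat \<Rightarrow> bool" where
  "pmi_run_inv nu Bs Bs' q \<longleftrightarrow> length Bs' = length Bs \<and>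
     (\<forall>i<length Bs. Bs'!i \<noteq> [] \<and>
        (nu < 1 / real (length Bs) \<longrightarrow> q + length (Bs'!i) \<le> length (Bs!i))) \<and>
     real q * ((1 - nu) * real (length Bs)) + real (sum_list (map length Bs'))
       \<le> real (sum_list (map length Bs))"

lemma pmi_run_inv_init:
  assumes "\<forall>B\<in>set Bs. B \<noteq> []"
  shows "pmi_run_inv nu Bs Bs 0"
  using assms by (simp add: pmi_run_inv_def)

lemma pmi_run_inv_query_bound:
  assumes inv: "pmi_run_inv nu Bs Bs' q" and "Bs \<noteq> []"
  shows "real q * ((1 - nu) * real (length Bs)) < real (sum_list (map length Bs))"
    and "nu < 1 / real (length Bs) \<Longrightarrow> \<forall>i<length Bs. q + 1 \<le> length (Bs!i)"
proof -
  have ne: "\<forall>i<length Bs. 0 < length (Bs'!i)" and len: "length Bs' = length Bs"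
    using inv by (auto simp: pmi_run_inv_def)
  have "0 < length (Bs'!0)" using ne assms(2) by simp
  also have "\<dots> \<le> sum_list (map length Bs')"
    using assms(2) len by (auto simp: sum_list_map_eq_sum_nth intro: member_le_sum)
  finally show "real q * ((1 - nu) * real (length Bs)) < real (sum_list (map length Bs))"
    using inv by (simp add: pmi_run_inv_def)
  show "\<forall>i<length Bs. q + 1 \<le> length (Bs!i)" if "nu < 1 / real (length Bs)"
  proof (intro allI impI)
    fix i assume "i < length Bs"
    with inv that have "q + length (Bs'!i) \<le> length (Bs!i)" by (simp add: pmi_run_inv_def)
    moreover have "0 < length (Bs'!i)" using ne \<open>i < length Bs\<close> by blast
    ultimately show "q + 1 \<le> length (Bs!i)" by linarith
  qed
qed

lemma card_nonneg_bags_eq_all: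
  assumes "(1 - nu) * real (length Bs) \<le> real (card (nonneg_bags Bs l))"
    and "nu < 1 / real (length Bs)"
  shows "nonneg_bags Bs l = {..<length Bs}"
proof -
  have sub: "nonneg_bags Bs l \<subseteq> {..<length Bs}" by (auto simp: nonneg_bags_def)
  have "nu * real (length Bs) < 1"
    using assms(2) by (cases "length Bs = 0") (auto simp: field_simps)
  with assms(1) have "length Bs \<le> card (nonneg_bags Bs l)" by (simp add: algebra_simps)
  with sub show ?thesis
    by (metis card_lessThan card_mono card_subset_eq finite_lessThan le_antisym)
qed

lemma pmi_run_inv_filter:
  fixes Phi :: "'x \<Rightarrow> 'h::real_inner"
  assumes inv: "pmi_run_inv nu Bs Bs' q" and rc: "round_classifier Phi nu Bs' l"
    and neg: "\<forall>i<length Bs'. \<exists>x\<in>set (Bs'!i). l x < 0"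
    and "Bs \<noteq> []" "0 < nu"
  shows "pmi_run_inv nu Bs (map (filter (\<lambda>x. sgn1 (l x) \<noteq> 1)) Bs') (Suc q)"
proof -
  define N where "N = length Bs"
  define P where "P = nonneg_bags Bs' l"
  define F where "F = filter (\<lambda>x. sgn1 (l x) \<noteq> 1)"
  have len: "length Bs' = N"
    and pb: "nu < 1 / real N \<Longrightarrow> \<forall>i<N. q + length (Bs'!i) \<le> length (Bs!i)"
    and tot: "real q * ((1 - nu) * real N) + real (\<Sum>i<N. length (Bs'!i))
                \<le> real (sum_list (map length Bs))"
    using inv by (auto simp: pmi_run_inv_def N_def sum_list_map_eq_sum_nth)
  have "Bs' \<noteq> []" using len assms(4) by (auto simp: N_def)
  with round_classifier_card_nonneg_bags[OF rc _ assms(5)] len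
  have P: "(1 - nu) * real N \<le> real (card P)" by (simp add: P_def)
  have F_ne: "F (Bs'!i) \<noteq> []" if "i < N" for i
    using neg that len by (force simp: F_def filter_empty_conv sgn1_eq_1_iff)
  have F_less: "length (F (Bs'!i)) < length (Bs'!i)" if "i \<in> P" for i
    using that unfolding P_def nonneg_bags_def F_def
    by (force intro: length_filter_less simp: sgn1_eq_1_iff)
  have "(\<Sum>i<N. length (F (Bs'!i))) + card P \<le> (\<Sum>i<N. length (Bs'!i))"
    using F_less len
    by (intro sum_plus_card_le_sum) (auto simp: F_def P_def nonneg_bags_def)
  hence "real (\<Sum>i<N. length (F (Bs'!i))) + real (card P) \<le> real (\<Sum>i<N. length (Bs'!i))"
    by (metis of_nat_add of_nat_le_iff)
  hence "real (Suc q) * ((1 - nu) * real N) + real (\<Sum>i<N. length (F (Bs'!i)))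
           \<le> real (sum_list (map length Bs))"
    using tot P unfolding of_nat_Suc distrib_right mult_1 by linarith
  moreover have "Suc q + length (F (Bs'!i)) \<le> length (Bs!i)"
    if "nu < 1 / real N" "i < N" for i
  proof -
    have "i \<in> P" using card_nonneg_bags_eq_all[of nu Bs' l] P that len by (simp add: P_def)
    with F_less pb[OF that(1)] that(2) show ?thesis by fastforce
  qed
  ultimately show ?thesis
    using F_ne len by (simp add: pmi_run_inv_def N_def F_def sum_list_map_eq_sum_nth)
qed

text \<open>After a positive answer the witness is the bag list the algorithm would have filtered to.\<close>

definition pmi_state_inv :: "real \<Rightarrow> 'x list list \<Rightarrow> 'x pmi_state \<Rightarrow> bool" where
  "pmi_state_inv nu Bs st = (case st of
     Run Bs' q \<Rightarrow> pmi_run_inv nu Bs Bs' q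
   | Stop q \<Rightarrow> (\<exists>Bs'. pmi_run_inv nu Bs Bs' q))"

lemma pmi_step_preserves_state_inv:
  assumes inv: "pmi_state_inv nu Bs st" and step: "pmi_step Phi nu label st st'"
    and "Bs \<noteq> []" "0 < nu"
  shows "pmi_state_inv nu Bs st'"
proof -
  obtain Bs' q l where st: "st = Run Bs' q" and rc: "round_classifier Phi nu Bs' l"
    and next_st: "(if (\<exists>i<length Bs'. \<forall>x\<in>set (Bs'!i). sgn1 (l x) = 1)
         then st' = Stop q
         else (\<exists>i j. if label (Bs'!i!j) then st' = Stop (Suc q)
                  else st' = Run (map (filter (\<lambda>x. sgn1 (l x) \<noteq> 1)) Bs') (Suc q)))"
    using step unfolding pmi_step_def by (smt (verit))
  have run: "pmi_run_inv nu Bs Bs' q" using inv st by (simp add: pmi_state_inv_def)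
  show ?thesis
  proof (cases "\<exists>i<length Bs'. \<forall>x\<in>set (Bs'!i). sgn1 (l x) = 1")
    case True
    with next_st run show ?thesis by (auto simp: pmi_state_inv_def)
  next
    case False
    hence "\<forall>i<length Bs'. \<exists>x\<in>set (Bs'!i). l x < 0" by (auto simp: sgn1_eq_1_iff not_le)
    from pmi_run_inv_filter[OF run rc this assms(3,4)] next_st False
    show ?thesis by (auto simp: pmi_state_inv_def split: if_splits)
  qed
qed

lemma reachable_pmi_run_inv:
  assumes "(pmi_step Phi nu label)\<^sup>*\<^sup>* (Run Bs 0) st"
    and "Bs \<noteq> []" "\<forall>B\<in>set Bs. B \<noteq> []" "0 < nu"
  obtains Bs' where "pmi_run_inv nu Bs Bs' (queries st)"
proof -
  from assms(1) have "pmi_state_inv nu Bs st"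
  proof (induction rule: rtranclp_induct)
    case base
    show ?case using pmi_run_inv_init[OF assms(3)] by (simp add: pmi_state_inv_def)
  next
    case (step st st')
    with pmi_step_preserves_state_inv assms(2,4) show ?case by blast
  qed
  with that show ?thesis by (cases st) (auto simp: pmi_state_inv_def)
qed

lemma real_le_ceiling_minus_one:
  fixes k x :: real
  assumes "real q * k < x" "0 < k"
  shows "real q \<le> of_int \<lceil>x / k\<rceil> - 1"
proof -
  have "real q < x / k" using assms by (simp add: field_simps)
  hence "int q < \<lceil>x / k\<rceil>" by (simp add: less_ceiling_iff)
  thus ?thesis by linarith
qed

theorem theorem3:
  fixes Bs :: "(real ^ 'd) list list"
    and Phi :: "real ^ 'd \<Rightarrow> 'h::real_inner"
    and nu :: real
    and label :: "real ^ 'd \<Rightarrow> bool"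
    and st :: "(real ^ 'd) pmi_state"
  assumes "0 < nu" and "nu < 1"
    and "Bs \<noteq> []" and "\<forall>B\<in>set Bs. B \<noteq> []"
    and "(pmi_step Phi nu label)\<^sup>*\<^sup>* (Run Bs 0) st"
  shows "if nu < 1 / real (length Bs)
         then queries st \<le> Min (length ` set Bs) - 1
         else real (queries st)
                \<le> of_int \<lceil>real (sum_list (map length Bs)) / ((1 - nu) * real (length Bs))\<rceil> - 1"
proof -
  obtain Bs' where inv: "pmi_run_inv nu Bs Bs' (queries st)"
    using reachable_pmi_run_inv assms(5,3,4,1) .
  show ?thesis
  proof (cases "nu < 1 / real (length Bs)")
    case True
    with pmi_run_inv_query_bound(2)[OF inv assms(3)]
    have "\<forall>B\<in>set Bs. queries st + 1 \<le> length B" by (auto simp: in_set_conv_nth)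
    with assms(3) have "queries st + 1 \<le> Min (length ` set Bs)" by simp
    with True show ?thesis by simp
  next
    case False
    have "0 < (1 - nu) * real (length Bs)" using assms(2,3) by simp
    with pmi_run_inv_query_bound(1)[OF inv assms(3)] False show ?thesis
      by (simp add: real_le_ceiling_minus_one)
  qed
qed

end
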